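(* Let $\xi\in\mathcal N$. If $\xi\cap(x+Q_\sigma)\ne\emptyset$ for all $x\in\mathbb Z^d$ and all $\sigma\in\{-1,+1\}^d$, then $\xi\in\mathcal N_{\rm pol}$.
   Context: $\mathcal N$ is the set of locally finite subsets of $\mathbb R^d$. For $\xi\in\mathcal N$ and $x\in\xi$, $\mathrm{Vor}(x|\xi)=\{y\in\mathbb R^d:|y-x|\le|y-z|\ \forall z\in\xi\}$. $\mathcal N_{\rm pol}$ is the set of $\xi\in\mathcal N$ such that $\mathrm{Vor}(x|\xi)$ is a convex polytope (equivalently a bounded polyhedron, i.e. a bounded intersection of finitely many closed half-spaces) for every $x\in\xi$. For $\sigma\in\{-1,+1\}^d$, the open orthant is $Q_\sigma=\{x\in\mathbb R^d:\sigma_ix_i>0,\ 1\le i\le d\}$. *)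

theory Defs
  imports "HOL-Analysis.Analysis"
begin

definition locally_finite_pts :: "('a::euclidean_space) set \<Rightarrow> bool" where
  "locally_finite_pts \<xi> \<longleftrightarrow> (\<forall>B. bounded B \<longrightarrow> finite (\<xi> \<inter> B))"

definition Vor :: "('a::euclidean_space) \<Rightarrow> 'a set \<Rightarrow> 'a set" where
  "Vor x \<xi> = {y. \<forall>z\<in>\<xi>. dist y x \<le> dist y z}"

definition N_pol :: "('a::euclidean_space) set set" where
  "N_pol = {\<xi>. locally_finite_pts \<xi> \<and> (\<forall>x\<in>\<xi>. polytope (Vor x \<xi>))}"

definition orthant :: "(real ^ 'd) \<Rightarrow> (real ^ 'd) set" where
  "orthant \<sigma> = {x. \<forall>i. \<sigma> $ i * x $ i > 0}"

definition sign_vectors :: "(real ^ 'd) set" where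
  "sign_vectors = {\<sigma>. \<forall>i. \<sigma> $ i \<in> {-1, 1}}"

definition int_points :: "(real ^ 'd) set" where
  "int_points = {x. \<forall>i. x $ i \<in> \<int>}"

end

theory Submission
  imports Defs
begin

text \<open>
  The Voronoi cell of \<open>x\<close> is the intersection of the half-spaces \<open>{y. dist y x \<le> dist y z}\<close>,
  \<open>z \<in> \<xi>\<close>. The hypothesis puts a point \<open>z\<^sub>\<sigma>\<close> of \<open>\<xi>\<close> in every open orthant \<open>x + Q\<^sub>\<sigma>\<close>
  (round \<open>x\<close> to a lattice point in the direction \<open>\<sigma>\<close>). Any \<open>y\<close> lies in some closed orthant
  \<open>x + cl Q\<^sub>\<sigma>\<close>, where the half-space of \<open>z\<^sub>\<sigma>\<close> cuts off a bounded cap; so already the \<open>2\<^sup>d\<close>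
  half-spaces of the \<open>z\<^sub>\<sigma>\<close> confine the cell to a ball \<open>cball x r\<close>. Points of \<open>\<xi>\<close> outside
  \<open>cball x (2 * r)\<close> then impose no constraint, and by local finiteness only finitely many
  half-spaces remain.
\<close>

definition Vor_halfspace :: "'a::euclidean_space \<Rightarrow> 'a \<Rightarrow> 'a set" where
  "Vor_halfspace x z = {y. dist y x \<le> dist y z}"

lemma Vor_eq_Inter_Vor_halfspace: "Vor x \<xi> = (\<Inter>z\<in>\<xi>. Vor_halfspace x z)"
  by (auto simp: Vor_def Vor_halfspace_def)

lemma Vor_halfspace_eq_inner_le:
  "Vor_halfspace x z = {y. (2 *\<^sub>R (z - x)) \<bullet> y \<le> z \<bullet> z - x \<bullet> x}"
proof -
  have "dist y x \<le> dist y z \<longleftrightarrow> (y - x) \<bullet> (y - x) \<le> (y - z) \<bullet> (y - z)" for y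
    by (simp add: dist_norm norm_le)
  then show ?thesis
    by (auto simp: Vor_halfspace_def inner_diff_left inner_diff_right inner_commute algebra_simps)
qed

lemma mem_Vor_halfspace_iff:
  "y \<in> Vor_halfspace x z \<longleftrightarrow> 2 * ((y - x) \<bullet> (z - x)) \<le> (z - x) \<bullet> (z - x)"
  by (simp add: Vor_halfspace_eq_inner_le inner_diff_left inner_diff_right inner_commute
      algebra_simps)

lemma polyhedron_Vor_halfspace: "polyhedron (Vor_halfspace x z)"
  unfolding Vor_halfspace_eq_inner_le by (rule polyhedron_halfspace_le)

lemma polytope_Vor_if_bounded_Inter:
  fixes \<xi> Z :: "'a::euclidean_space set"
  assumes "locally_finite_pts \<xi>" "finite Z" "Z \<subseteq> \<xi>"
    and "bounded (\<Inter>z\<in>Z. Vor_halfspace x z)"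
  shows "polytope (Vor x \<xi>)"
proof -
  obtain r where r: "(\<Inter>z\<in>Z. Vor_halfspace x z) \<subseteq> ball x r"
    using assms(4) bounded_subset_ballD by blast
  define T where "T = Z \<union> (\<xi> \<inter> cball x (2 * r))"
  have "finite T"
    using assms(1,2) by (simp add: T_def locally_finite_pts_def)
  have "Vor x \<xi> = (\<Inter>z\<in>T. Vor_halfspace x z)"
  proof
    show "Vor x \<xi> \<subseteq> (\<Inter>z\<in>T. Vor_halfspace x z)"
      using assms(3) by (auto simp: T_def Vor_eq_Inter_Vor_halfspace)
  next
    show "(\<Inter>z\<in>T. Vor_halfspace x z) \<subseteq> Vor x \<xi>"
    proof
      fix y assume y: "y \<in> (\<Inter>z\<in>T. Vor_halfspace x z)"
      then have "dist x y < r"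
        using r by (auto simp: T_def)
      \<comment> \<open>a point \<open>z\<close> with \<open>dist x z > 2 * r\<close> is farther from \<open>y\<close> than \<open>x\<close> is\<close>
      then have "y \<in> Vor_halfspace x z" if "z \<in> \<xi>" for z
        using y that dist_triangle[of x z y]
        by (cases "dist x z \<le> 2 * r") (auto simp: T_def Vor_halfspace_def dist_commute)
      then show "y \<in> Vor x \<xi>"
        by (simp add: Vor_eq_Inter_Vor_halfspace)
    qed
  qed
  moreover have "bounded (Vor x \<xi>)"
    using assms(4) by (rule bounded_subset)
      (use assms(3) in \<open>auto simp: Vor_eq_Inter_Vor_halfspace\<close>)
  ultimately show ?thesis
    using \<open>finite T\<close> polyhedron_Vor_halfspace
    by (auto simp: polytope_eq_bounded_polyhedron intro!: polyhedron_Inter)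
qed

lemma bounded_halfspace_cap_in_closed_orthant:
  fixes z :: "real ^ 'd"
  assumes "\<And>i. z $ i \<noteq> 0"
  shows "bounded {v. (\<forall>i. 0 \<le> v $ i * z $ i) \<and> 2 * (v \<bullet> z) \<le> z \<bullet> z}"
proof (rule boundedI)
  define m where "m = Min (range (\<lambda>i. \<bar>z $ i\<bar>))"
  have "m > 0"
    using assms by (simp add: m_def)
  fix v assume v: "v \<in> {v. (\<forall>i. 0 \<le> v $ i * z $ i) \<and> 2 * (v \<bullet> z) \<le> z \<bullet> z}"
  have "m * norm v \<le> m * (\<Sum>i\<in>UNIV. \<bar>v $ i\<bar>)"
    using \<open>m > 0\<close> norm_le_l1_cart[of v] by (intro mult_left_mono) auto
  also have "\<dots> = (\<Sum>i\<in>UNIV. \<bar>v $ i\<bar> * m)"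
    by (simp add: sum_distrib_left mult.commute)
  also have "\<dots> \<le> (\<Sum>i\<in>UNIV. \<bar>v $ i\<bar> * \<bar>z $ i\<bar>)"
    by (intro sum_mono mult_left_mono) (auto simp: m_def)
  also have "\<dots> = (\<Sum>i\<in>UNIV. v $ i * z $ i)"
    using v by (intro sum.cong) (auto simp: abs_mult[symmetric])
  also have "\<dots> \<le> (z \<bullet> z) / 2"
    using v by (simp add: inner_vec_def)
  finally show "norm v \<le> (z \<bullet> z) / (2 * m)"
    using \<open>m > 0\<close> by (simp add: field_simps)
qed

lemma finite_sign_vectors: "finite (sign_vectors :: (real ^ 'd) set)"
proof -
  have "sign_vectors \<subseteq> (\<lambda>S. \<chi> i. if i \<in> S then 1 else -1) ` (UNIV :: 'd set set)"
  proof
    fix \<sigma> :: "real ^ 'd" assume "\<sigma> \<in> sign_vectors"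
    then have "\<sigma> = (\<chi> i. if i \<in> {i. \<sigma> $ i = 1} then 1 else -1)"
      by (auto simp: sign_vectors_def vec_eq_iff)
    then show "\<sigma> \<in> range (\<lambda>S. \<chi> i. if i \<in> S then 1 else -1)"
      by blast
  qed
  then show ?thesis
    by (rule finite_subset) simp
qed

lemma bounded_Inter_Vor_halfspace_orthants:
  fixes x :: "real ^ 'd"
  assumes z: "\<And>\<sigma>. \<sigma> \<in> sign_vectors \<Longrightarrow> z \<sigma> - x \<in> orthant \<sigma>"
  shows "bounded (\<Inter>\<sigma>\<in>sign_vectors. Vor_halfspace x (z \<sigma>))"
proof -
  define cap where
    "cap w = {v. (\<forall>i. 0 \<le> v $ i * w $ i) \<and> 2 * (v \<bullet> w) \<le> w \<bullet> w}" for w :: "real ^ 'd"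
  have cover: "(\<Inter>\<sigma>\<in>sign_vectors. Vor_halfspace x (z \<sigma>))
          \<subseteq> (\<lambda>v. x + v) ` (\<Union>\<sigma>\<in>sign_vectors. cap (z \<sigma> - x))"
  proof
    fix y assume y: "y \<in> (\<Inter>\<sigma>\<in>sign_vectors. Vor_halfspace x (z \<sigma>))"
    define \<sigma> :: "real ^ 'd" where "\<sigma> = (\<chi> i. if 0 \<le> (y - x) $ i then 1 else -1)"
    have "\<sigma> \<in> sign_vectors"
      by (simp add: \<sigma>_def sign_vectors_def)
    have "0 \<le> (y - x) $ i * (z \<sigma> - x) $ i" for i
    proof -
      have "0 < \<sigma> $ i * (z \<sigma> - x) $ i"
        using z[OF \<open>\<sigma> \<in> sign_vectors\<close>] by (simp add: orthant_def)
      then show ?thesis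
        by (cases "0 \<le> (y - x) $ i") (auto simp: \<sigma>_def intro: mult_nonpos_nonpos)
    qed
    then have "y - x \<in> cap (z \<sigma> - x)"
      using y \<open>\<sigma> \<in> sign_vectors\<close> by (simp add: cap_def mem_Vor_halfspace_iff)
    then show "y \<in> (\<lambda>v. x + v) ` (\<Union>\<sigma>\<in>sign_vectors. cap (z \<sigma> - x))"
      using \<open>\<sigma> \<in> sign_vectors\<close> by (auto intro!: image_eqI[of _ _ "y - x"])
  qed
  have "bounded (cap (z \<sigma> - x))" if "\<sigma> \<in> sign_vectors" for \<sigma>
  proof -
    have "(z \<sigma> - x) $ i \<noteq> 0" for i
      using z[OF that] unfolding orthant_def by (metis mem_Collect_eq mult_zero_right less_irrefl)
    then show ?thesis
      unfolding cap_def by (rule bounded_halfspace_cap_in_closed_orthant)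
  qed
  then have "bounded ((\<lambda>v. x + v) ` (\<Union>\<sigma>\<in>sign_vectors. cap (z \<sigma> - x)))"
    using finite_sign_vectors by (intro bounded_translation bounded_UN) auto
  with cover show ?thesis
    by (rule bounded_subset[rotated])
qed

lemma point_in_every_orthant:
  fixes \<xi> :: "(real ^ 'd) set" and x :: "real ^ 'd"
  assumes "\<forall>p\<in>int_points. \<forall>\<sigma>\<in>sign_vectors. \<xi> \<inter> ((\<lambda>q. p + q) ` orthant \<sigma>) \<noteq> {}"
    and "\<sigma> \<in> sign_vectors"
  shows "\<exists>z\<in>\<xi>. z - x \<in> orthant \<sigma>"
proof -
  define p :: "real ^ 'd" where
    "p = (\<chi> i. if \<sigma> $ i = 1 then of_int \<lceil>x $ i\<rceil> else of_int \<lfloor>x $ i\<rfloor>)"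
  have "p \<in> int_points"
    by (simp add: p_def int_points_def)
  with assms obtain q where q: "q \<in> orthant \<sigma>" "p + q \<in> \<xi>"
    by blast
  have "0 \<le> \<sigma> $ i * (p - x) $ i" for i
  proof -
    have "\<sigma> $ i \<in> {-1, 1}"
      using assms(2) by (simp add: sign_vectors_def)
    then show ?thesis
      by (auto simp: p_def)
  qed
  moreover have "0 < \<sigma> $ i * q $ i" for i
    using q(1) by (simp add: orthant_def)
  ultimately have "0 < \<sigma> $ i * (p - x) $ i + \<sigma> $ i * q $ i" for i
    by (simp add: add_nonneg_pos)
  then have "p + q - x \<in> orthant \<sigma>"
    by (simp add: orthant_def algebra_simps)
  with q(2) show ?thesis
    by blast
qed

theorem lemma2p3:
  fixes \<xi> :: "(real ^ 'd) set"
  assumes "locally_finite_pts \<xi>"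
    and "\<forall>x\<in>int_points. \<forall>\<sigma>\<in>sign_vectors. \<xi> \<inter> ((\<lambda>q. x + q) ` orthant \<sigma>) \<noteq> {}"
  shows "\<xi> \<in> N_pol"
proof -
  have "polytope (Vor x \<xi>)" for x
  proof -
    have "\<forall>\<sigma>\<in>sign_vectors. \<exists>w. w \<in> \<xi> \<and> w - x \<in> orthant \<sigma>"
      using point_in_every_orthant[OF assms(2)] by blast
    then obtain z where z: "\<And>\<sigma>. \<sigma> \<in> sign_vectors \<Longrightarrow> z \<sigma> \<in> \<xi> \<and> z \<sigma> - x \<in> orthant \<sigma>"
      by metis
    have "bounded (\<Inter>w\<in>z ` sign_vectors. Vor_halfspace x w)"
      using bounded_Inter_Vor_halfspace_orthants[of z x] z by simp
    then show ?thesis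
      using assms(1) finite_sign_vectors z
      by (intro polytope_Vor_if_bounded_Inter[of \<xi> "z ` sign_vectors"]) auto
  qed
  with assms(1) show ?thesis
    by (simp add: N_pol_def)
qed

end
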